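(* Assume the setting below, with $\mathbb{E}A^\alpha=1$ for some $\alpha>1$, $\mathbb{P}[A=1]<1$, $\mathbb{E}A^{\alpha+\delta}<\infty$ for some $\delta>0$, and the law of $\log A$ nonarithmetic. Then there are constants $C,\delta'>0$ such that for all sufficiently large $x$, $$\mathbb{P}\Big(\sum_{j=1}^{n_1}\widetilde Z^j_{j,j+n_1}>x\Big)\le e^{-C(\log x)^{\delta'}}x^{-\alpha}.$$
   Context: Environment: $\omega=(\omega_n)_{n\in\mathbb{Z}}$ i.i.d. $(0,1)$-valued with law $P$; $A_n=(1-\omega_n)/\omega_n$, $A$ a generic copy; $\Lambda(s)=\log\mathbb{E}A^s$, $\rho_0=\Lambda'(\alpha)=\mathbb{E}[A^\alpha\log A]$. Branching process: given $\omega$, for each $i\in\mathbb{Z}$ the $i$-th immigrant produces $Z_{i,i}$ children with $\mathbb{P}_\omega(Z_{i,i}=l)=\omega_{i-1}(1-\omega_{i-1})^l$; $Z_{i,n}=0$ for $n<i$; for $n\ge i$, $Z_{i,n+1}=\sum_{k=1}^{Z_{i,n}}\xi^{(i)}_{n,k}$ with all offspring variables independent under $\mathbb{P}_\omega$ and $\mathbb{P}_\omega(\xi^{(i)}_{n,k}=l)=\omega_n(1-\omega_n)^l$. $\widetilde Z^i_{k,n}=\sum_{j=k}^nZ_{i,j}$. $\mathbb{P}$ annealed law. $n_0=\lfloor\log x/\rho_0\rfloor$, $m=\lfloor(\log x)^{1/2+\sigma}\rfloor$ for a fixed small $\sigma>0$, $n_1=n_0-m$. Nonarithmetic: the law of $\log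 A$ is not concentrated on any lattice $h\mathbb{Z}$. *)

theory Defs
  imports "HOL-Probability.Probability"
begin

text \<open>Offspring law with parameter p: P(l) = p (1-p)^l (geometric); totalised outside (0,1]
  so that it is a total function of the environment value.\<close>
definition geom :: "real \<Rightarrow> nat pmf" where
  "geom p = (if 0 < p \<and> p \<le> 1 then geometric_pmf p else return_pmf 0)"

fun geom_sum :: "real \<Rightarrow> nat \<Rightarrow> nat pmf" where
  "geom_sum p 0 = return_pmf 0"
| "geom_sum p (Suc k) = bind_pmf (geom p) (\<lambda>a. map_pmf (\<lambda>b. a + b) (geom_sum p k))"

text \<open>Quenched law (environment w) of the pair (Z_{i,i+k}, Ztilde^i_{i,i+k}) for the
  descendants of the i-th immigrant.\<close>
fun Zpath :: "(int \<Rightarrow> real) \<Rightarrow> int \<Rightarrow> nat \<Rightarrow> (nat \<times> nat) pmf" where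
  "Zpath w i 0 = map_pmf (\<lambda>z. (z, z)) (geom (w (i - 1)))"
| "Zpath w i (Suc k) = bind_pmf (Zpath w i k)
     (\<lambda>(z, s). map_pmf (\<lambda>z'. (z', s + z')) (geom_sum (w (i + int k)) z))"

text \<open>Quenched law of  sum_{j=1}^{k} Ztilde^j_{j,j+n}; the families of different immigrants are
  independent under the quenched law.\<close>
fun Ztot :: "(int \<Rightarrow> real) \<Rightarrow> nat \<Rightarrow> nat \<Rightarrow> nat pmf" where
  "Ztot w n 0 = return_pmf 0"
| "Ztot w n (Suc k) = bind_pmf (Ztot w n k)
     (\<lambda>s. map_pmf (\<lambda>t. s + snd t) (Zpath w (int (Suc k)) n))"

definition env :: "real measure \<Rightarrow> (int \<Rightarrow> real) measure" where
  "env P = PiM UNIV (\<lambda>_. P)"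

definition annealed_tail :: "real measure \<Rightarrow> nat \<Rightarrow> nat \<Rightarrow> real \<Rightarrow> real" where
  "annealed_tail P n k x =
     (\<integral>w. measure_pmf.prob (Ztot w n k) {s. real s > x} \<partial>env P)"

definition Aof :: "real \<Rightarrow> real" where
  "Aof w = (1 - w) / w"

definition rho0 :: "real measure \<Rightarrow> real \<Rightarrow> real" where
  "rho0 P \<alpha> = (\<integral>w. Aof w powr \<alpha> * ln (Aof w) \<partial>P)"

definition n1 :: "real measure \<Rightarrow> real \<Rightarrow> real \<Rightarrow> real \<Rightarrow> int" where
  "n1 P \<alpha> \<sigma> x = \<lfloor>ln x / rho0 P \<alpha>\<rfloor> - \<lfloor>ln x powr (1/2 + \<sigma>)\<rfloor>"

end

theory Submission
  imports Defs "HOL-Real_Asymp.Real_Asymp"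
begin

text \<open>
  A union bound reduces the tail of the sum to the tails of the generation sizes
  \<open>Z\<^sub>j\<^sub>,\<^sub>j\<^sub>+\<^sub>t\<close> (\<open>1 \<le> j, t \<le> n\<close>) at level \<open>x / (n(n+1))\<close>.
  Given the environment, a generation size has a linear fractional generating function,
  \<open>E (1+h)^Z = 1 + E h / (1 - (U - 1) h)\<close>, where \<open>E\<close> is the product of the
  \<open>A\<close>'s along the path and \<open>U\<close> the sum of its tail products; an exponential
  Markov bound gives \<open>P(Z > y) \<lesssim> E U^(\<beta>-1) y^(-\<beta>)\<close>. Averaging over the i.i.d.
  environment turns \<open>E U^(\<beta>-1)\<close> into products of the moments \<open>E A\<close> and
  \<open>E A^\<beta>\<close>. For \<open>\<beta> = \<alpha> + \<epsilon>\<close> with \<open>\<epsilon> = (log x)^(-1/2)\<close>,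
  the expansion \<open>E A^(\<alpha>+\<epsilon>) \<le> 1 + \<epsilon>\<rho>\<^sub>0 + O(\<epsilon>\<^sup>2)\<close> and
  \<open>n \<le> log x / \<rho>\<^sub>0 - (log x)^(1/2+\<sigma>)\<close> give
  \<open>(E A^(\<alpha>+\<epsilon>))^(n+1) \<lesssim> x^\<epsilon> exp(-\<rho>\<^sub>0 (log x)^\<sigma>)\<close>, which beats all
  polynomial factors.
\<close>

section \<open>Quenched generating function of a generation\<close>

definition geom_mean :: "real \<Rightarrow> real" where
  "geom_mean p = (if 0 < p \<and> p \<le> 1 then (1 - p) / p else 0)"

lemma geom_mean_nonneg: "geom_mean p \<ge> 0"
  by (auto simp: geom_mean_def)

lemma geom_mean_eq_Aof: "0 < p \<Longrightarrow> p < 1 \<Longrightarrow> geom_mean p = Aof p"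
  by (simp add: geom_mean_def Aof_def)

lemma geom_mean_measurable [measurable]: "geom_mean \<in> borel_measurable borel"
  unfolding geom_mean_def by measurable

lemma geom_pgf:
  assumes h: "h \<ge> 0" "geom_mean p * h < 1"
  shows "(\<integral>\<^sup>+a. ennreal ((1+h)^a) \<partial>geom p) = ennreal (1 / (1 - geom_mean p * h))"
proof (cases "0 < p \<and> p \<le> 1")
  case True
  have q0: "0 \<le> (1-p)*(1+h)" using True h by auto
  have q1: "(1-p)*(1+h) < 1"
  proof -
    have "geom_mean p * h * p < p" using h True by (simp add: mult_less_cancel_right1)
    hence "(1-p) * h < p" using True by (simp add: geom_mean_def)
    thus ?thesis by (simp add: algebra_simps)
  qed
  have "(\<integral>\<^sup>+a. ennreal ((1+h)^a) \<partial>geom p) = (\<Sum>a. ennreal (p * ((1-p)*(1+h))^a))"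
    using True h
    by (simp add: geom_def nn_integral_measure_pmf nn_integral_count_space_nat
        ennreal_mult'[symmetric] power_mult_distrib mult_ac)
  also have "\<dots> = ennreal (p * (1 / (1 - (1-p)*(1+h))))"
    by (intro suminf_ennreal_eq sums_mult geometric_sums) (use q0 q1 True in auto)
  also have "p * (1 / (1 - (1-p)*(1+h))) = 1 / (1 - geom_mean p * h)"
    using True q1 by (simp add: geom_mean_def field_simps)
  finally show ?thesis .
next
  case False
  hence "geom p = return_pmf 0" "geom_mean p = 0" by (auto simp: geom_def geom_mean_def)
  then show ?thesis by simp
qed

lemma geom_sum_pgf:
  assumes h: "h \<ge> 0" "geom_mean p * h < 1"
  shows "(\<integral>\<^sup>+b. ennreal ((1+h)^b) \<partial>geom_sum p z) = ennreal ((1 / (1 - geom_mean p * h))^z)"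
proof (induction z)
  case 0
  then show ?case by simp
next
  case (Suc z)
  have "(\<integral>\<^sup>+b. ennreal ((1+h)^b) \<partial>geom_sum p (Suc z))
      = (\<integral>\<^sup>+a. ennreal ((1+h)^a) * (\<integral>\<^sup>+b. ennreal ((1+h)^b) \<partial>geom_sum p z) \<partial>geom p)"
    using h by (simp add: power_add ennreal_mult' nn_integral_cmult)
  also have "\<dots> = (\<integral>\<^sup>+a. ennreal ((1+h)^a) \<partial>geom p) * ennreal ((1 / (1 - geom_mean p * h))^z)"
    by (simp add: Suc nn_integral_multc)
  also have "\<dots> = ennreal ((1 / (1 - geom_mean p * h))^Suc z)"
    using h by (simp add: geom_pgf ennreal_mult'[symmetric] geom_mean_nonneg)
  finally show ?case .
qed

definition Zgen :: "(int \<Rightarrow> real) \<Rightarrow> int \<Rightarrow> nat \<Rightarrow> nat pmf" where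
  "Zgen w i k = map_pmf fst (Zpath w i k)"

lemma Zgen_0: "Zgen w i 0 = geom (w (i - 1))"
  by (simp add: Zgen_def pmf.map_comp o_def)

lemma Zgen_Suc: "Zgen w i (Suc k) = bind_pmf (Zgen w i k) (geom_sum (w (i + int k)))"
  by (simp add: Zgen_def map_bind_pmf bind_map_pmf pmf.map_comp o_def case_prod_unfold)

text \<open>\<open>env_ratio w i l\<close> is \<open>A\<^sub>i\<^sub>-\<^sub>1\<^sub>+\<^sub>l\<close>; \<open>gen_mean w i k\<close> is the quenched
  mean of \<open>Z\<^sub>i\<^sub>,\<^sub>i\<^sub>+\<^sub>k\<close>.\<close>

definition env_ratio :: "(int \<Rightarrow> real) \<Rightarrow> int \<Rightarrow> nat \<Rightarrow> real" where
  "env_ratio w i l = geom_mean (w (i - 1 + int l))"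

fun gen_mean :: "(int \<Rightarrow> real) \<Rightarrow> int \<Rightarrow> nat \<Rightarrow> real" where
  "gen_mean w i 0 = env_ratio w i 0"
| "gen_mean w i (Suc k) = env_ratio w i (Suc k) * gen_mean w i k"

fun gen_spread :: "(int \<Rightarrow> real) \<Rightarrow> int \<Rightarrow> nat \<Rightarrow> real" where
  "gen_spread w i 0 = 1 + env_ratio w i 0"
| "gen_spread w i (Suc k) = 1 + env_ratio w i (Suc k) * gen_spread w i k"

lemma env_ratio_nonneg: "env_ratio w i l \<ge> 0"
  by (simp add: env_ratio_def geom_mean_nonneg)

lemma gen_mean_nonneg: "gen_mean w i k \<ge> 0"
  by (induction k) (auto simp: env_ratio_nonneg)

lemma gen_spread_ge_1: "gen_spread w i k \<ge> 1"
  by (induction k) (auto simp: env_ratio_nonneg)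

lemma gen_mean_eq_prod: "gen_mean w i k = (\<Prod>l\<le>k. env_ratio w i l)"
  by (induction k) (auto simp: mult.commute)

lemma gen_spread_eq_sum: "gen_spread w i k = (\<Sum>j\<le>Suc k. \<Prod>l\<in>{j..k}. env_ratio w i l)"
proof (induction k)
  case 0
  then show ?case by simp
next
  case (Suc k)
  have "(\<Prod>l\<in>{j..Suc k}. env_ratio w i l) = env_ratio w i (Suc k) * (\<Prod>l\<in>{j..k}. env_ratio w i l)"
    if "j \<le> Suc k" for j
    using that by (simp add: mult.commute)
  then have "(\<Sum>j\<le>Suc (Suc k). \<Prod>l\<in>{j..Suc k}. env_ratio w i l)
      = (\<Sum>j\<le>Suc k. env_ratio w i (Suc k) * (\<Prod>l\<in>{j..k}. env_ratio w i l)) + 1"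
    by (simp add: ac_simps)
  then show ?case using Suc by (simp add: sum_distrib_left distrib_left)
qed

lemma Zgen_pgf:
  assumes "h \<ge> 0" "(gen_spread w i k - 1) * h < 1"
  shows "(\<integral>\<^sup>+z. ennreal ((1+h)^z) \<partial>Zgen w i k)
       = ennreal (1 + gen_mean w i k * h / (1 - (gen_spread w i k - 1) * h))"
  using assms
proof (induction k arbitrary: h)
  case 0
  have "1 + geom_mean (w (i - 1)) * h / (1 - geom_mean (w (i - 1)) * h)
      = 1 / (1 - geom_mean (w (i - 1)) * h)"
    using 0 by (simp add: env_ratio_def field_simps)
  then show ?case using 0 by (simp add: Zgen_0 geom_pgf env_ratio_def)
next
  case (Suc k)
  define a where "a = env_ratio w i (Suc k)"
  define U where "U = gen_spread w i k"
  define E where "E = gen_mean w i k"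
  have a0: "a \<ge> 0" by (simp add: a_def env_ratio_nonneg)
  have U1: "U \<ge> 1" by (simp add: U_def gen_spread_ge_1)
  have aUh: "a * U * h < 1" using Suc.prems by (simp add: a_def U_def mult_ac)
  have "a * h * 1 \<le> a * h * U"
    using a0 U1 Suc.prems(1) by (intro mult_left_mono) auto
  hence "a * h \<le> a * U * h" by (simp add: mult_ac)
  hence ah: "a * h < 1" using aUh by linarith
  \<comment> \<open>one generation step replaces \<open>1 + h\<close> by \<open>1 / (1 - a h) = 1 + h'\<close>\<close>
  define h' where "h' = a * h / (1 - a * h)"
  have h'0: "h' \<ge> 0" using ah a0 Suc.prems(1) by (simp add: h'_def)
  have one: "1 / (1 - a * h) = 1 + h'" using ah by (simp add: h'_def field_simps)
  have cond: "(U - 1) * h' < 1"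
  proof -
    have "(U - 1) * (a * h) < 1 - a * h" using aUh by (simp add: algebra_simps)
    thus ?thesis using ah by (simp add: h'_def field_simps)
  qed
  have "(\<integral>\<^sup>+z. ennreal ((1+h)^z) \<partial>Zgen w i (Suc k))
      = (\<integral>\<^sup>+z. ennreal ((1+h')^z) \<partial>Zgen w i k)"
    using Suc.prems(1) ah one by (simp add: Zgen_Suc geom_sum_pgf a_def env_ratio_def)
  also have "\<dots> = ennreal (1 + E * h' / (1 - (U - 1) * h'))"
    using Suc.IH[OF h'0] cond by (simp add: E_def U_def)
  also have "E * h' / (1 - (U - 1) * h') = E * (a * h) / (1 - a * U * h)"
  proof -
    have d1: "1 - a * h \<noteq> 0" using ah by simp
    have "1 - (U - 1) * h' = (1 - a * U * h) / (1 - a * h)"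
      using d1 by (simp add: h'_def field_simps)
    thus ?thesis using d1 by (simp add: h'_def)
  qed
  finally show ?case by (simp add: E_def U_def a_def mult_ac)
qed

section \<open>Exponential Markov bound\<close>

lemma one_plus_power_div_fact_le_exp:
  fixes t :: real
  assumes "t \<ge> 0" "m \<ge> 1"
  shows "1 + t ^ m / fact m \<le> exp t"
proof -
  have sums: "(\<lambda>n. t ^ n / fact n) sums exp t"
    using exp_converges[of t] by (simp add: divide_inverse_commute)
  have "(\<Sum>n\<in>{0, m}. t ^ n / fact n) \<le> (\<Sum>n. t ^ n / fact n)"
    by (rule sum_le_suminf) (use sums assms in \<open>auto simp: sums_iff\<close>)
  then show ?thesis using sums assms by (simp add: sums_iff)
qed

lemma powr_le_fact_mult_exp_minus_one:
  fixes t \<beta> :: real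
  assumes t: "t > 0" and b: "\<beta> \<ge> 1"
  shows "t powr \<beta> \<le> fact (nat \<lceil>\<beta>\<rceil>) * (exp t - 1)"
proof -
  define m where "m = nat \<lceil>\<beta>\<rceil>"
  have m1: "m \<ge> 1" and bm: "\<beta> \<le> real m"
    using b by (auto simp: m_def) linarith
  have e0: "t \<le> exp t - 1" using exp_ge_add_one_self[of t] by linarith
  show ?thesis
  proof (cases "t \<le> 1")
    case True
    have "t powr \<beta> \<le> t powr 1" using True t b by (intro powr_mono') auto
    also have "\<dots> \<le> exp t - 1" using t e0 by simp
    also have "\<dots> \<le> fact m * (exp t - 1)"
      using t e0 mult_right_mono[of 1 "fact m :: real" "exp t - 1"] by simp
    finally show ?thesis by (simp add: m_def)
  next
    case False
    have "t powr \<beta> \<le> t powr real m" using False bm by (intro powr_mono) auto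
    also have "\<dots> = t ^ m" using t by (simp add: powr_realpow)
    also have "\<dots> \<le> fact m * (exp t - 1)"
      using one_plus_power_div_fact_le_exp[of t m] t m1 by (simp add: field_simps)
    finally show ?thesis by (simp add: m_def)
  qed
qed

lemma half_le_ln_one_plus:
  assumes "0 \<le> (h::real)" "h \<le> 1"
  shows "h / 2 \<le> ln (1 + h)"
proof -
  have "h / 2 \<le> h / (1 + h)" using assms by (intro divide_left_mono) auto
  also have "\<dots> \<le> ln (h + 1)" using ln_add1_ge assms by simp
  finally show ?thesis by (simp add: add.commute)
qed

lemma powr_le_fact_mult_one_plus_powr_minus_one:
  fixes y h \<beta> :: real
  assumes y: "y > 0" and h: "0 < h" "h \<le> 1" and b: "\<beta> \<ge> 1"
  shows "(y * h / 2) powr \<beta> \<le> fact (nat \<lceil>\<beta>\<rceil>) * ((1 + h) powr y - 1)"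
proof -
  have "y * h / 2 \<le> y * ln (1 + h)"
    using half_le_ln_one_plus[of h] h y by (simp add: mult_left_mono)
  then have "exp (y * h / 2) \<le> (1 + h) powr y" using h by (simp add: powr_def)
  moreover have "(y * h / 2) powr \<beta> \<le> fact (nat \<lceil>\<beta>\<rceil>) * (exp (y * h / 2) - 1)"
    using y h b by (intro powr_le_fact_mult_exp_minus_one) auto
  ultimately show ?thesis
    by (smt (verit, best) fact_ge_zero mult_left_mono)
qed

lemma pmf_tail_mult_le_pgf:
  fixes M :: "nat pmf" and h y R :: real
  assumes h: "h \<ge> 0" and y: "y \<ge> 0"
    and pgf: "(\<integral>\<^sup>+z. ennreal ((1+h)^z) \<partial>M) = ennreal (1 + R)" and R: "R \<ge> 0"
  shows "measure_pmf.prob M {z. real z > y} * ((1 + h) powr y - 1) \<le> R"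
proof -
  define c where "c = (1 + h) powr y - 1"
  have c0: "c \<ge> 0" using h y by (simp add: c_def ge_one_powr_ge_zero)
  have "(\<integral>\<^sup>+z. ennreal ((1+h)^z) \<partial>M) = (\<integral>\<^sup>+z. ennreal ((1+h)^z - 1) + 1 \<partial>M)"
  proof (intro nn_integral_cong)
    fix z :: nat
    have "1 \<le> (1+h)^z" using h by simp
    then show "ennreal ((1+h)^z) = ennreal ((1+h)^z - 1) + 1"
      using ennreal_plus[of "(1+h)^z - 1" 1] by simp
  qed
  also have "\<dots> = (\<integral>\<^sup>+z. ennreal ((1+h)^z - 1) \<partial>M) + 1"
    by (subst nn_integral_add) (auto simp: measure_pmf.emeasure_space_1)
  finally have "1 + (\<integral>\<^sup>+z. ennreal ((1+h)^z - 1) \<partial>M) = 1 + ennreal R"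
    using pgf R ennreal_plus[of 1 R] by (simp add: add.commute)
  then have int: "(\<integral>\<^sup>+z. ennreal ((1+h)^z - 1) \<partial>M) = ennreal R"
    unfolding ennreal_add_left_cancel by simp
  have "emeasure M {z. real z > y} * ennreal c = (\<integral>\<^sup>+z. ennreal c * indicator {z. real z > y} z \<partial>M)"
    by (simp add: nn_integral_cmult_indicator mult.commute)
  also have "\<dots> \<le> (\<integral>\<^sup>+z. ennreal ((1+h)^z - 1) \<partial>M)"
  proof (intro nn_integral_mono)
    fix z :: nat
    show "ennreal c * indicator {z. real z > y} z \<le> ennreal ((1+h)^z - 1)"
    proof (cases "real z > y")
      case True
      have "(1+h) powr y \<le> (1+h) powr (real z)" using True h by (intro powr_mono) auto
      then have "c \<le> (1+h)^z - 1" using h by (simp add: c_def powr_realpow)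
      then show ?thesis using True by (simp add: ennreal_leI)
    qed simp
  qed
  finally show ?thesis
    using int c0 R by (simp add: measure_pmf.emeasure_eq_measure ennreal_mult'[symmetric] c_def)
qed

lemma Zgen_tail:
  fixes y \<beta> :: real
  assumes y: "y > 0" and b: "\<beta> \<ge> 1"
  shows "emeasure (Zgen w i k) {z. real z > y}
     \<le> ennreal (fact (nat \<lceil>\<beta>\<rceil>) * 4 powr \<beta> * gen_mean w i k * gen_spread w i k powr (\<beta> - 1) / y powr \<beta>)"
proof -
  define U where "U = gen_spread w i k"
  define E where "E = gen_mean w i k"
  define F where "F = (fact (nat \<lceil>\<beta>\<rceil>) :: real)"
  define h where "h = 1 / (2 * U)"
  define R where "R = E * h / (1 - (U - 1) * h)"
  define t where "t = y * h / 2"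
  have U1: "U \<ge> 1" by (simp add: U_def gen_spread_ge_1)
  have E0: "E \<ge> 0" by (simp add: E_def gen_mean_nonneg)
  have h0: "h > 0" "h \<le> 1/2" using U1 by (auto simp: h_def field_simps)
  have Uh: "(U - 1) * h \<le> 1/2" using U1 by (simp add: h_def field_simps)
  have R0: "R \<ge> 0" using E0 h0 Uh by (simp add: R_def)
  have RE: "R \<le> E / U"
  proof -
    have "R \<le> E * h / (1/2)" unfolding R_def using E0 h0 Uh by (intro divide_left_mono) auto
    also have "\<dots> = E / U" using U1 by (simp add: h_def field_simps)
    finally show ?thesis .
  qed
  have pgf: "(\<integral>\<^sup>+z. ennreal ((1+h)^z) \<partial>Zgen w i k) = ennreal (1 + R)"
    using Zgen_pgf[of h w i k] h0 Uh by (simp add: R_def U_def E_def)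
  have markov: "measure_pmf.prob (Zgen w i k) {z. real z > y} * ((1 + h) powr y - 1) \<le> R"
    using h0 y R0 by (intro pmf_tail_mult_le_pgf[OF _ _ pgf]) auto
  have tpos: "t powr \<beta> > 0" using y h0 by (simp add: t_def)
  have lower: "t powr \<beta> / F \<le> (1 + h) powr y - 1"
    using powr_le_fact_mult_one_plus_powr_minus_one[OF y h0(1) _ b] h0
    by (simp add: t_def F_def field_simps)
  have tF: "t powr \<beta> / F > 0" using tpos by (simp add: F_def)
  have "measure_pmf.prob (Zgen w i k) {z. real z > y} * (t powr \<beta> / F) \<le> E / U"
    using markov lower RE by (smt (verit) measure_nonneg mult_left_mono)
  then have "measure_pmf.prob (Zgen w i k) {z. real z > y} \<le> (E / U) / (t powr \<beta> / F)"
    by (rule pos_le_divide_eq[THEN iffD2, OF tF])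
  also have "\<dots> = F * 4 powr \<beta> * E * U powr (\<beta> - 1) / y powr \<beta>"
  proof -
    have "t = y / (4 * U)" using U1 by (simp add: t_def h_def field_simps)
    then have "t powr \<beta> = y powr \<beta> / (4 powr \<beta> * U powr \<beta>)"
      using U1 y by (simp add: powr_divide powr_mult)
    moreover have "U powr \<beta> = U * U powr (\<beta> - 1)" using U1 by (simp add: powr_diff)
    ultimately have "y powr \<beta> = U * t powr \<beta> * U powr (\<beta> - 1) * 4 powr \<beta>"
      using U1 y tpos by (simp add: field_simps)
    moreover have "U powr (\<beta> - 1) > 0" "(4::real) powr \<beta> > 0" using U1 by auto
    ultimately show ?thesis using U1 tpos by (simp add: F_def field_simps)
  qed
  finally show ?thesis
    by (simp add: measure_pmf.emeasure_eq_measure F_def E_def U_def ennreal_leI)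
qed
section \<open>Union bound over immigrants and generations\<close>

lemma emeasure_shift_gt_le:
  fixes M :: "'a pmf" and s a b :: real and Z :: "'a \<Rightarrow> real"
  assumes "b \<ge> 0"
  shows "emeasure M {t. s + Z t > a + b} \<le> indicator {s. s > a} s + emeasure M {t. Z t > b}"
proof (cases "s > a")
  case True
  have "emeasure M {t. s + Z t > a + b} \<le> 1" by (simp add: measure_pmf.emeasure_le_1)
  also have "\<dots> \<le> indicator {s. s > a} s + emeasure M {t. Z t > b}" using True by simp
  finally show ?thesis .
next
  case False
  have "emeasure M {t. s + Z t > a + b} \<le> emeasure M {t. Z t > b}"
    using False by (intro emeasure_mono) auto
  then show ?thesis using False by simp
qed

lemma nn_integral_indicator_gt:
  fixes M :: "'a pmf" and Z :: "'a \<Rightarrow> real"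
  shows "(\<integral>\<^sup>+t. indicator {s. s > c} (Z t) \<partial>M) = emeasure M {t. Z t > c}"
proof -
  have "(\<integral>\<^sup>+t. indicator {s. s > c} (Z t) \<partial>M) = (\<integral>\<^sup>+t. indicator {t. Z t > c} t \<partial>M)"
    by (intro nn_integral_cong) (simp add: indicator_def)
  also have "\<dots> = emeasure M {t. Z t > c}" by (rule nn_integral_indicator) simp
  finally show ?thesis .
qed

lemma Zpath_total_tail:
  fixes y :: real
  assumes y: "y \<ge> 0"
  shows "emeasure (Zpath w i g) {t. real (snd t) > real (Suc g) * y}
      \<le> (\<Sum>l\<le>g. emeasure (Zgen w i l) {z. real z > y})"
proof (induction g)
  case 0
  have "emeasure (Zpath w i 0) {t. real (snd t) > real (Suc 0) * y}
       = emeasure (Zgen w i 0) {z. real z > y}"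
    by (simp add: Zgen_0 vimage_def)
  then show ?case by simp
next
  case (Suc g)
  define a where "a = w (i + int g)"
  have "emeasure (Zpath w i (Suc g)) {t. real (snd t) > real (Suc (Suc g)) * y}
      = (\<integral>\<^sup>+t. emeasure (geom_sum a (fst t)) {z'. real (snd t) + real z' > real (Suc g) * y + y} \<partial>Zpath w i g)"
    by (simp add: a_def case_prod_unfold vimage_def algebra_simps)
  also have "\<dots> \<le> (\<integral>\<^sup>+t. indicator {s. s > real (Suc g) * y} (real (snd t))
                        + emeasure (geom_sum a (fst t)) {z'. real z' > y} \<partial>Zpath w i g)"
    by (intro nn_integral_mono emeasure_shift_gt_le[OF y])
  also have "\<dots> = (\<integral>\<^sup>+t. indicator {s. s > real (Suc g) * y} (real (snd t)) \<partial>Zpath w i g)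
                  + (\<integral>\<^sup>+t. emeasure (geom_sum a (fst t)) {z'. real z' > y} \<partial>Zpath w i g)"
    by (rule nn_integral_add) auto
  also have "(\<integral>\<^sup>+t. emeasure (geom_sum a (fst t)) {z'. real z' > y} \<partial>Zpath w i g)
           = emeasure (Zgen w i (Suc g)) {z. real z > y}"
    unfolding Zgen_Suc emeasure_bind_pmf unfolding Zgen_def nn_integral_map_pmf a_def ..
  also have "(\<integral>\<^sup>+t. indicator {s. s > real (Suc g) * y} (real (snd t)) \<partial>Zpath w i g)
           = emeasure (Zpath w i g) {t. real (snd t) > real (Suc g) * y}"
    by (rule nn_integral_indicator_gt)
  also have "emeasure (Zpath w i g) {t. real (snd t) > real (Suc g) * y} + emeasure (Zgen w i (Suc g)) {z. real z > y}
      \<le> (\<Sum>l\<le>g. emeasure (Zgen w i l) {z. real z > y}) + emeasure (Zgen w i (Suc g)) {z. real z > y}"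
    by (rule add_right_mono[OF Suc.IH])
  also have "\<dots> = (\<Sum>l\<le>Suc g. emeasure (Zgen w i l) {z. real z > y})"
    by simp
  finally show ?case .
qed

lemma Ztot_tail:
  fixes Y :: real
  assumes Y: "Y \<ge> 0"
  shows "emeasure (Ztot w n k) {s. real s > real k * Y}
      \<le> (\<Sum>j\<in>{1..k}. emeasure (Zpath w (int j) n) {t. real (snd t) > Y})"
proof (induction k)
  case 0
  then show ?case by simp
next
  case (Suc k)
  have "emeasure (Ztot w n (Suc k)) {s. real s > real (Suc k) * Y}
      = (\<integral>\<^sup>+s. emeasure (Zpath w (int (Suc k)) n) {t. real s + real (snd t) > real k * Y + Y} \<partial>Ztot w n k)"
    by (simp add: vimage_def algebra_simps)
  also have "\<dots> \<le> (\<integral>\<^sup>+s. indicator {s. s > real k * Y} (real s)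
                        + emeasure (Zpath w (int (Suc k)) n) {t. real (snd t) > Y} \<partial>Ztot w n k)"
    by (intro nn_integral_mono emeasure_shift_gt_le[OF Y])
  also have "\<dots> = (\<integral>\<^sup>+s. indicator {s. s > real k * Y} (real s) \<partial>Ztot w n k)
                  + (\<integral>\<^sup>+s. emeasure (Zpath w (int (Suc k)) n) {t. real (snd t) > Y} \<partial>Ztot w n k)"
    by (rule nn_integral_add) auto
  also have "(\<integral>\<^sup>+s. emeasure (Zpath w (int (Suc k)) n) {t. real (snd t) > Y} \<partial>Ztot w n k)
     = emeasure (Zpath w (int (Suc k)) n) {t. real (snd t) > Y}"
    by (simp add: measure_pmf.emeasure_space_1)
  also have "(\<integral>\<^sup>+s. indicator {s. s > real k * Y} (real s) \<partial>Ztot w n k)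
           = emeasure (Ztot w n k) {s. real s > real k * Y}"
    by (rule nn_integral_indicator_gt)
  also have "emeasure (Ztot w n k) {s. real s > real k * Y} + emeasure (Zpath w (int (Suc k)) n) {t. real (snd t) > Y}
     \<le> (\<Sum>j\<in>{1..k}. emeasure (Zpath w (int j) n) {t. real (snd t) > Y}) + emeasure (Zpath w (int (Suc k)) n) {t. real (snd t) > Y}"
    by (rule add_right_mono[OF Suc.IH])
  also have "\<dots> = (\<Sum>j\<in>{1..Suc k}. emeasure (Zpath w (int j) n) {t. real (snd t) > Y})"
    by simp
  finally show ?case .
qed

section \<open>Averaging over the environment\<close>

lemma powr_sum_le_card_powr_mult_sum_powr:
  fixes T :: "'a \<Rightarrow> real" and \<gamma> :: real
  assumes J: "finite J" "J \<noteq> {}" and T: "\<And>j. T j \<ge> 0" and g: "\<gamma> \<ge> 0"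
  shows "(\<Sum>j\<in>J. T j) powr \<gamma> \<le> real (card J) powr \<gamma> * (\<Sum>j\<in>J. T j powr \<gamma>)"
proof -
  have "Max (T ` J) \<in> T ` J" using J by (intro Max_in) auto
  then obtain j0 where j0: "j0 \<in> J" "T j0 = Max (T ` J)" by auto
  have max: "T j \<le> T j0" if "j \<in> J" for j
    using J that by (simp add: j0(2) Max_ge)
  have "(\<Sum>j\<in>J. T j) \<le> real (card J) * T j0"
    using sum_mono[OF max, of J] by simp
  then have "(\<Sum>j\<in>J. T j) powr \<gamma> \<le> (real (card J) * T j0) powr \<gamma>"
    using T g by (intro powr_mono2 sum_nonneg) auto
  also have "\<dots> = real (card J) powr \<gamma> * T j0 powr \<gamma>" using T by (simp add: powr_mult)
  also have "T j0 powr \<gamma> \<le> (\<Sum>j\<in>J. T j powr \<gamma>)"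
    using j0 J by (metis member_le_sum powr_ge_zero)
  finally show ?thesis by (simp add: mult_left_mono)
qed

lemma mult_powr_self: "(a::real) \<ge> 0 \<Longrightarrow> a * a powr g = a powr (1 + g)"
  by (cases "a = 0") (simp_all add: powr_add)

lemma gen_mean_mult_spread_powr_le:
  fixes \<gamma> :: real
  assumes g: "\<gamma> \<ge> 0"
  shows "gen_mean w i k * gen_spread w i k powr \<gamma>
     \<le> real (k+2) powr \<gamma> *
        (\<Sum>j\<le>Suc k. \<Prod>l\<le>k. (if j \<le> l then env_ratio w i l powr (1+\<gamma>) else env_ratio w i l))"
proof -
  define T where "T j = (\<Prod>l\<in>{j..k}. env_ratio w i l)" for j
  have "gen_spread w i k powr \<gamma> \<le> real (k+2) powr \<gamma> * (\<Sum>j\<le>Suc k. T j powr \<gamma>)"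
    using powr_sum_le_card_powr_mult_sum_powr[of "{..Suc k}" T \<gamma>] g
    by (simp add: gen_spread_eq_sum T_def prod_nonneg env_ratio_nonneg)
  then have "gen_mean w i k * gen_spread w i k powr \<gamma>
      \<le> gen_mean w i k * (real (k+2) powr \<gamma> * (\<Sum>j\<le>Suc k. T j powr \<gamma>))"
    by (rule mult_left_mono) (rule gen_mean_nonneg)
  also have "\<dots> = real (k+2) powr \<gamma> * (\<Sum>j\<le>Suc k. gen_mean w i k * T j powr \<gamma>)"
    by (simp only: sum_distrib_left mult.left_commute)
  also have "(\<Sum>j\<le>Suc k. gen_mean w i k * T j powr \<gamma>)
      = (\<Sum>j\<le>Suc k. \<Prod>l\<le>k. (if j \<le> l then env_ratio w i l powr (1+\<gamma>) else env_ratio w i l))"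
  proof (intro sum.cong refl)
    fix j
    have set: "{j..k} = {l \<in> {..k}. j \<le> l}" by auto
    have "T j powr \<gamma> = (\<Prod>l\<le>k. (if j \<le> l then env_ratio w i l powr \<gamma> else 1))"
      unfolding T_def prod_powr_distrib set by (rule prod.inter_filter) simp
    then have "gen_mean w i k * T j powr \<gamma>
        = (\<Prod>l\<le>k. env_ratio w i l * (if j \<le> l then env_ratio w i l powr \<gamma> else 1))"
      by (simp add: gen_mean_eq_prod prod.distrib)
    also have "\<dots> = (\<Prod>l\<le>k. (if j \<le> l then env_ratio w i l powr (1+\<gamma>) else env_ratio w i l))"
      by (intro prod.cong refl) (simp add: mult_powr_self env_ratio_nonneg)
    finally show "gen_mean w i k * T j powr \<gamma> = \<dots>" .
  qed
  finally show ?thesis .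
qed

lemma measurable_env_component: "(\<lambda>w. w i) \<in> measurable (env P) P"
  unfolding env_def by (rule measurable_component_singleton) simp

lemma nn_integral_env_prod:
  assumes P: "prob_space P" and J: "finite J"
    and f: "\<And>i. i \<in> J \<Longrightarrow> f i \<in> borel_measurable P"
  shows "(\<integral>\<^sup>+ w. (\<Prod>i\<in>J. f i (w i)) \<partial>env P) = (\<Prod>i\<in>J. integral\<^sup>N P (f i))"
proof -
  interpret product_prob_space "\<lambda>_::int. P" UNIV
    by (simp add: product_prob_space_def product_sigma_finite_def P prob_space_imp_sigma_finite
       product_prob_space_axioms_def)
  have "(\<Prod>i\<in>J. integral\<^sup>N P (f i)) = (\<integral>\<^sup>+ x. (\<Prod>i\<in>J. f i (x i)) \<partial>Pi\<^sub>M J (\<lambda>_. P))"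
    by (rule product_nn_integral_prod[symmetric]) (use J f in auto)
  also have "\<dots> = (\<integral>\<^sup>+ x. (\<Prod>i\<in>J. f i (x i))
                    \<partial>distr (PiM UNIV (\<lambda>_. P)) (PiM J (\<lambda>_. P)) (\<lambda>x. restrict x J))"
    by (subst distr_PiM_restrict_finite) (use J in auto)
  also have "\<dots> = (\<integral>\<^sup>+ w. (\<Prod>i\<in>J. f i (restrict w J i)) \<partial>PiM UNIV (\<lambda>_. P))"
    by (subst nn_integral_distr) (use J f in auto)
  also have "\<dots> = (\<integral>\<^sup>+ w. (\<Prod>i\<in>J. f i (w i)) \<partial>env P)"
    unfolding env_def by (intro nn_integral_cong prod.cong) auto
  finally show ?thesis by simp
qed

lemma nn_integral_env_prod_reindex:
  fixes \<phi> :: "nat \<Rightarrow> int"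
  assumes P: "prob_space P" and L: "finite L" and inj: "inj_on \<phi> L"
    and g: "\<And>l. l \<in> L \<Longrightarrow> g l \<in> borel_measurable P"
  shows "(\<integral>\<^sup>+ w. (\<Prod>l\<in>L. g l (w (\<phi> l))) \<partial>env P) = (\<Prod>l\<in>L. integral\<^sup>N P (g l))"
proof -
  define f where "f i = g (the_inv_into L \<phi> i)" for i
  have fl: "f (\<phi> l) = g l" if "l \<in> L" for l
    using that inj by (simp add: f_def the_inv_into_f_f)
  have "(\<integral>\<^sup>+ w. (\<Prod>l\<in>L. g l (w (\<phi> l))) \<partial>env P) = (\<integral>\<^sup>+ w. (\<Prod>i\<in>\<phi> ` L. f i (w i)) \<partial>env P)"
    by (intro nn_integral_cong) (simp add: prod.reindex[OF inj] fl)
  also have "\<dots> = (\<Prod>i\<in>\<phi> ` L. integral\<^sup>N P (f i))"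
    by (rule nn_integral_env_prod[OF P]) (use L g fl in auto)
  also have "\<dots> = (\<Prod>l\<in>L. integral\<^sup>N P (g l))"
    by (simp add: prod.reindex[OF inj] fl)
  finally show ?thesis .
qed

lemma nn_integral_env_prod_shift_le:
  fixes g :: "nat \<Rightarrow> real \<Rightarrow> ennreal"
  assumes P: "prob_space P" and g: "\<And>l. g l \<in> borel_measurable P"
    and le: "\<And>l. integral\<^sup>N P (g l) \<le> M"
  shows "(\<integral>\<^sup>+w. (\<Prod>l\<le>k. g l (w (i - 1 + int l))) \<partial>env P) \<le> M ^ (k+1)"
proof -
  have "inj_on (\<lambda>l. i - 1 + int l) {..k}" by (auto simp: inj_on_def)
  then have "(\<integral>\<^sup>+w. (\<Prod>l\<le>k. g l (w (i - 1 + int l))) \<partial>env P) = (\<Prod>l\<le>k. integral\<^sup>N P (g l))"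
    by (intro nn_integral_env_prod_reindex[OF P] g) auto
  also have "\<dots> \<le> (\<Prod>l\<le>k. M)" by (intro prod_mono_ennreal le)
  finally show ?thesis by simp
qed

lemma nn_integral_gen_mean_mult_spread_powr:
  fixes \<beta> M :: real
  assumes P: "prob_space P" and sP: "sets P = sets borel" and b: "\<beta> \<ge> 1" and M0: "M \<ge> 0"
    and mA: "(\<integral>\<^sup>+x. ennreal (geom_mean x) \<partial>P) \<le> ennreal M"
    and mB: "(\<integral>\<^sup>+x. ennreal (geom_mean x powr \<beta>) \<partial>P) \<le> ennreal M"
  shows "(\<integral>\<^sup>+w. ennreal (gen_mean w i k * gen_spread w i k powr (\<beta> - 1)) \<partial>env P)
         \<le> ennreal (real (k+2) powr \<beta> * M ^ (k+1))"
proof -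
  \<comment> \<open>each summand of the pointwise bound is a product over distinct sites of \<open>A\<close> or
    \<open>A^\<beta>\<close>, so its expectation factorises\<close>
  define g where "g j l x = (if j \<le> l then geom_mean x powr \<beta> else geom_mean x)" for j l :: nat and x
  define \<phi> where "\<phi> l = i - 1 + int l" for l
  define c where "c = real (k+2) powr (\<beta> - 1)"
  have g0: "g j l x \<ge> 0" for j l x by (simp add: g_def geom_mean_nonneg)
  have gm: "(\<lambda>x. ennreal (g j l x)) \<in> borel_measurable P" for j l
    unfolding g_def by (simp add: measurable_cong_sets[OF sP refl])
  have comp: "(\<lambda>w. ennreal (g j l (w (\<phi> l)))) \<in> borel_measurable (env P)" for j l
    using measurable_env_component gm by (rule measurable_compose)
  have meas: "(\<lambda>w. \<Prod>l\<le>k. ennreal (g j l (w (\<phi> l)))) \<in> borel_measurable (env P)" for j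
    using comp by (intro borel_measurable_prod_ennreal) auto
  have gi: "(\<integral>\<^sup>+x. ennreal (g j l x) \<partial>P) \<le> ennreal M" for j l
    using mA mB by (cases "j \<le> l") (simp_all add: g_def)
  have prod: "(\<integral>\<^sup>+w. (\<Prod>l\<le>k. ennreal (g j l (w (\<phi> l)))) \<partial>env P) \<le> ennreal M ^ (k+1)" for j
    unfolding \<phi>_def by (rule nn_integral_env_prod_shift_le[OF P gm gi])
  have ptw: "ennreal (gen_mean w i k * gen_spread w i k powr (\<beta> - 1))
      \<le> ennreal c * (\<Sum>j\<le>Suc k. \<Prod>l\<le>k. ennreal (g j l (w (\<phi> l))))" for w
  proof -
    have "gen_mean w i k * gen_spread w i k powr (\<beta> - 1) \<le> c * (\<Sum>j\<le>Suc k. \<Prod>l\<le>k. g j l (w (\<phi> l)))"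
      using gen_mean_mult_spread_powr_le[of "\<beta> - 1" w i k] b
      unfolding c_def g_def env_ratio_def \<phi>_def diff_add_cancel add.commute[of 1] by simp
    then have "ennreal (gen_mean w i k * gen_spread w i k powr (\<beta> - 1))
        \<le> ennreal (c * (\<Sum>j\<le>Suc k. \<Prod>l\<le>k. g j l (w (\<phi> l))))"
      by (rule ennreal_leI)
    also have "\<dots> = ennreal c * (\<Sum>j\<le>Suc k. \<Prod>l\<le>k. ennreal (g j l (w (\<phi> l))))"
      using g0 by (simp add: c_def ennreal_mult sum_nonneg prod_nonneg prod_ennreal)
    finally show ?thesis .
  qed
  have "(\<integral>\<^sup>+w. ennreal (gen_mean w i k * gen_spread w i k powr (\<beta> - 1)) \<partial>env P)
     \<le> (\<integral>\<^sup>+w. ennreal c * (\<Sum>j\<le>Suc k. \<Prod>l\<le>k. ennreal (g j l (w (\<phi> l)))) \<partial>env P)"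
    by (intro nn_integral_mono ptw)
  also have "\<dots> = ennreal c * (\<Sum>j\<le>Suc k. \<integral>\<^sup>+w. (\<Prod>l\<le>k. ennreal (g j l (w (\<phi> l)))) \<partial>env P)"
    using meas by (simp add: nn_integral_cmult nn_integral_sum del: sum.atMost_Suc)
  also have "\<dots> \<le> ennreal c * (\<Sum>j\<le>Suc k. ennreal M ^ (k+1))"
    by (intro mult_left_mono sum_mono prod) auto
  also have "\<dots> = ennreal c * ennreal (\<Sum>j\<le>Suc k. M ^ (k+1))"
    using M0 by (simp only: ennreal_power sum_ennreal zero_le_power)
  also have "\<dots> = ennreal (real (k+2) powr \<beta> * M ^ (k+1))"
    using M0 by (simp add: c_def ennreal_mult'[symmetric] powr_diff)
  finally show ?thesis .
qed

lemma integral_le_of_nn_integral_le: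
  fixes f :: "'a \<Rightarrow> real"
  assumes f0: "\<And>x. f x \<ge> 0" and le: "(\<integral>\<^sup>+x. ennreal (f x) \<partial>M) \<le> ennreal B" and B: "B \<ge> 0"
  shows "integral\<^sup>L M f \<le> B"
proof (cases "integrable M f")
  case True
  have "integral\<^sup>L M f = enn2real (\<integral>\<^sup>+x. ennreal (f x) \<partial>M)"
    using True f0 by (simp add: integral_eq_nn_integral)
  also have "\<dots> \<le> enn2real (ennreal B)"
    using le by (intro enn2real_mono) auto
  finally show ?thesis using B by simp
next
  case False
  then show ?thesis using B by (simp add: not_integrable_integral_eq)
qed

lemma env_ratio_measurable:
  assumes "sets P = sets borel"
  shows "(\<lambda>w. env_ratio w i l) \<in> borel_measurable (env P)"
proof -
  have "geom_mean \<in> borel_measurable P" by (simp add: measurable_cong_sets[OF assms refl])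
  with measurable_env_component show ?thesis
    unfolding env_ratio_def by (rule measurable_compose)
qed

lemma gen_mean_mult_spread_powr_measurable:
  assumes "sets P = sets borel"
  shows "(\<lambda>w. ennreal (gen_mean w i k * gen_spread w i k powr g)) \<in> borel_measurable (env P)"
proof -
  have "(\<lambda>w. gen_mean w i k) \<in> borel_measurable (env P)"
    unfolding gen_mean_eq_prod using env_ratio_measurable[OF assms]
    by (intro borel_measurable_prod) auto
  moreover have "(\<lambda>w. gen_spread w i k) \<in> borel_measurable (env P)"
    unfolding gen_spread_eq_sum using env_ratio_measurable[OF assms]
    by (intro borel_measurable_sum borel_measurable_prod) auto
  ultimately show ?thesis by measurable
qed

lemma quenched_tail_le:
  fixes x \<beta> :: real
  assumes b: "\<beta> \<ge> 1" and n: "n \<ge> 1" and x: "x > 0"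
  defines "y \<equiv> x / (real n * real (n+1))"
  defines "c \<equiv> fact (nat \<lceil>\<beta>\<rceil>) * 4 powr \<beta> / y powr \<beta>"
  shows "ennreal (measure_pmf.prob (Ztot w n n) {s. real s > x})
     \<le> (\<Sum>j\<in>{1..n}. \<Sum>t\<le>n. ennreal c * ennreal (gen_mean w (int j) t * gen_spread w (int j) t powr (\<beta> - 1)))"
proof -
  have y: "y > 0" using n x by (simp add: y_def)
  define Y where "Y = real (Suc n) * y"
  have Y: "Y \<ge> 0" using y by (simp add: Y_def)
  have "real n * real (n+1) \<noteq> 0" using n by simp
  then have xY: "x = real n * Y" unfolding Y_def y_def by (simp add: field_simps)
  have "ennreal (measure_pmf.prob (Ztot w n n) {s. real s > x})
      = emeasure (Ztot w n n) {s. real s > real n * Y}"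
    by (simp add: measure_pmf.emeasure_eq_measure xY)
  also have "\<dots> \<le> (\<Sum>j\<in>{1..n}. emeasure (Zpath w (int j) n) {t. real (snd t) > real (Suc n) * y})"
    using Ztot_tail[OF Y] by (simp add: Y_def)
  also have "\<dots> \<le> (\<Sum>j\<in>{1..n}. \<Sum>t\<le>n. emeasure (Zgen w (int j) t) {z. real z > y})"
    by (intro sum_mono Zpath_total_tail) (use y in auto)
  also have "\<dots> \<le> (\<Sum>j\<in>{1..n}. \<Sum>t\<le>n.
                   ennreal c * ennreal (gen_mean w (int j) t * gen_spread w (int j) t powr (\<beta> - 1)))"
  proof (intro sum_mono)
    fix j t
    have "emeasure (Zgen w (int j) t) {z. real z > y}
       \<le> ennreal (c * (gen_mean w (int j) t * gen_spread w (int j) t powr (\<beta> - 1)))"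
      using Zgen_tail[OF y b, of w "int j" t] by (simp add: c_def field_simps)
    also have "\<dots> = ennreal c * ennreal (gen_mean w (int j) t * gen_spread w (int j) t powr (\<beta> - 1))"
      by (rule ennreal_mult) (simp_all add: c_def gen_mean_nonneg)
    finally show "emeasure (Zgen w (int j) t) {z. real z > y} \<le> \<dots>" .
  qed
  finally show ?thesis .
qed

lemma annealed_tail_le_moments:
  fixes \<beta> M x :: real
  assumes P: "prob_space P" and sP: "sets P = sets borel" and b: "\<beta> \<ge> 1" and M1: "M \<ge> 1"
    and mA: "(\<integral>\<^sup>+x. ennreal (geom_mean x) \<partial>P) \<le> ennreal M"
    and mB: "(\<integral>\<^sup>+x. ennreal (geom_mean x powr \<beta>) \<partial>P) \<le> ennreal M"
    and n: "n \<ge> 1" and x: "x > 0"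
  shows "annealed_tail P n n x \<le> fact (nat \<lceil>\<beta>\<rceil>) * 4 powr \<beta> * (real n * real (n+1)) powr (1 + \<beta>)
            * real (n+2) powr \<beta> * M ^ (n+1) / x powr \<beta>"
proof -
  define N where "N = real n * real (n+1)"
  define y where "y = x / N"
  define c where "c = fact (nat \<lceil>\<beta>\<rceil>) * 4 powr \<beta> / y powr \<beta>"
  define R where "R = real (n+2) powr \<beta> * M ^ (n+1)"
  have N: "N > 0" using n by (simp add: N_def)
  have c0: "c \<ge> 0" and R0: "R \<ge> 0" using M1 by (simp_all add: c_def R_def)
  have bound: "(\<integral>\<^sup>+w. ennreal (gen_mean w (int j) t * gen_spread w (int j) t powr (\<beta> - 1)) \<partial>env P)
      \<le> ennreal R" if "t \<le> n" for j t
  proof -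
    have "real (t+2) powr \<beta> * M ^ (t+1) \<le> R"
      unfolding R_def using that b M1
      by (intro mult_mono powr_mono2 power_increasing) auto
    then show ?thesis
      using nn_integral_gen_mean_mult_spread_powr[OF P sP b _ mA mB, of "int j" t] M1
      by (smt (verit) ennreal_leI order_trans)
  qed
  have "(\<integral>\<^sup>+w. ennreal (measure_pmf.prob (Ztot w n n) {s. real s > x}) \<partial>env P)
      \<le> (\<integral>\<^sup>+w. (\<Sum>j\<in>{1..n}. \<Sum>t\<le>n.
            ennreal c * ennreal (gen_mean w (int j) t * gen_spread w (int j) t powr (\<beta> - 1))) \<partial>env P)"
    using quenched_tail_le[OF b n x] by (intro nn_integral_mono) (simp add: c_def y_def N_def)
  also have "\<dots> = (\<Sum>j\<in>{1..n}. \<Sum>t\<le>n. ennreal c *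
      (\<integral>\<^sup>+w. ennreal (gen_mean w (int j) t * gen_spread w (int j) t powr (\<beta> - 1)) \<partial>env P))"
    using gen_mean_mult_spread_powr_measurable[OF sP]
    by (simp add: nn_integral_sum borel_measurable_sum nn_integral_cmult)
  also have "\<dots> \<le> (\<Sum>j\<in>{1..n}. \<Sum>t\<le>n. ennreal c * ennreal R)"
    by (intro sum_mono mult_left_mono bound) auto
  also have "\<dots> = ennreal (\<Sum>j\<in>{1..n}. \<Sum>t\<le>n. c * R)"
    using c0 R0 by (simp only: ennreal_mult[symmetric] sum_ennreal mult_nonneg_nonneg sum_nonneg)
  also have "\<dots> = ennreal (N * (c * R))" by (simp add: N_def mult.assoc)
  finally have "annealed_tail P n n x \<le> N * (c * R)"
    unfolding annealed_tail_def using c0 R0 N by (intro integral_le_of_nn_integral_le) auto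
  also have "N * (c * R) = fact (nat \<lceil>\<beta>\<rceil>) * 4 powr \<beta> * N powr (1 + \<beta>) * R / x powr \<beta>"
    using N x by (simp add: c_def y_def powr_divide powr_add field_simps)
  finally show ?thesis by (simp add: N_def R_def mult_ac)
qed

section \<open>Moments of order slightly above \<open>\<alpha>\<close>\<close>

lemma exp_le_second_order: "exp (u::real) \<le> 1 + u + u^2 * exp \<bar>u\<bar>"
proof -
  obtain t where t: "\<bar>t\<bar> \<le> \<bar>u\<bar>" "exp u = (\<Sum>m<2. u ^ m / fact m) + exp t / fact 2 * u ^ 2"
    using Maclaurin_exp_le[of u 2] by blast
  have "exp t \<le> exp \<bar>u\<bar>" using t(1) by simp
  then have "exp t / 2 \<le> exp \<bar>u\<bar>" using exp_gt_zero[of t] by linarith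
  then have "exp t / 2 * u^2 \<le> exp \<bar>u\<bar> * u^2" by (intro mult_right_mono) auto
  then show ?thesis using t(2) by (simp add: numeral_2_eq_2 mult.commute)
qed

lemma exp_add_mult_le_second_order:
  fixes \<alpha> \<epsilon> c L :: real
  assumes "0 \<le> \<epsilon>" "\<epsilon> \<le> c"
  shows "exp ((\<alpha> + \<epsilon>) * L) \<le> exp (\<alpha> * L) + \<epsilon> * (exp (\<alpha> * L) * L)
           + \<epsilon>^2 * (exp (\<alpha> * L) * L^2 * exp (c * \<bar>L\<bar>))"
proof -
  have "exp (\<epsilon> * L) \<le> 1 + \<epsilon> * L + (\<epsilon> * L)^2 * exp \<bar>\<epsilon> * L\<bar>" by (rule exp_le_second_order)
  also have "\<dots> \<le> 1 + \<epsilon> * L + (\<epsilon> * L)^2 * exp (c * \<bar>L\<bar>)"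
    using assms by (intro add_left_mono mult_left_mono) (auto simp: abs_mult intro!: mult_right_mono)
  finally have "exp (\<alpha> * L) * exp (\<epsilon> * L)
      \<le> exp (\<alpha> * L) * (1 + \<epsilon> * L + (\<epsilon> * L)^2 * exp (c * \<bar>L\<bar>))"
    by (intro mult_left_mono) auto
  then show ?thesis by (simp add: exp_add[symmetric] algebra_simps power_mult_distrib)
qed

lemma square_le_exp_mult:
  fixes b s :: real
  assumes b: "b > 0" and s: "s \<ge> 0"
  shows "s^2 \<le> (2/b)^2 * exp (b * s)"
proof -
  have "(b/2) * s \<le> exp ((b/2) * s)" using exp_ge_add_one_self[of "(b/2) * s"] by linarith
  then have "s \<le> (2/b) * exp ((b/2) * s)" using b by (simp add: field_simps)
  then have "s^2 \<le> ((2/b) * exp ((b/2) * s))^2" using s by (intro power_mono) auto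
  also have "\<dots> = (2/b)^2 * exp (b * s)"
    by (simp add: power_mult_distrib power2_eq_square exp_add[symmetric])
  finally show ?thesis .
qed

lemma second_order_weight_le:
  fixes \<alpha> \<delta> c L :: real
  assumes a: "\<alpha> > 0" and d: "\<delta> > 0" and c0: "c \<ge> 0" and c1: "c \<le> \<delta>/2" and c2: "c \<le> \<alpha>/2"
  shows "exp (\<alpha> * L) * L^2 * exp (c * \<bar>L\<bar>) \<le> (4/\<delta>)^2 * exp ((\<alpha> + \<delta>) * L) + (4/\<alpha>)^2"
proof (cases "L \<ge> 0")
  case True
  have "L^2 \<le> (4/\<delta>)^2 * exp ((\<delta>/2) * L)"
    using square_le_exp_mult[of "\<delta>/2" L] d True by simp
  then have "exp (\<alpha> * L) * L^2 * exp (c * \<bar>L\<bar>)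
      \<le> exp (\<alpha> * L) * ((4/\<delta>)^2 * exp ((\<delta>/2) * L)) * exp (c * \<bar>L\<bar>)"
    by (intro mult_right_mono mult_left_mono) auto
  also have "\<dots> = (4/\<delta>)^2 * exp ((\<alpha> + \<delta>/2 + c) * L)"
    using True by (simp add: exp_add[symmetric] algebra_simps)
  also have "\<dots> \<le> (4/\<delta>)^2 * exp ((\<alpha> + \<delta>) * L)"
    using True c1 by (intro mult_left_mono) (auto intro!: mult_right_mono)
  finally show ?thesis by (smt (verit) zero_le_power2)
next
  case False
  have "L^2 \<le> (4/\<alpha>)^2 * exp ((\<alpha>/2) * (- L))"
    using square_le_exp_mult[of "\<alpha>/2" "- L"] a False by simp
  then have "exp (\<alpha> * L) * L^2 * exp (c * \<bar>L\<bar>)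
      \<le> exp (\<alpha> * L) * ((4/\<alpha>)^2 * exp ((\<alpha>/2) * (- L))) * exp (c * \<bar>L\<bar>)"
    by (intro mult_right_mono mult_left_mono) auto
  also have "\<dots> = (4/\<alpha>)^2 * exp ((\<alpha>/2 - c) * L)"
    using False by (simp add: exp_add[symmetric] algebra_simps)
  also have "\<dots> \<le> (4/\<alpha>)^2 * 1"
    using False c2 by (intro mult_left_mono) (auto simp: mult_nonneg_nonpos)
  finally show ?thesis by (smt (verit) exp_gt_zero zero_le_power2 mult_nonneg_nonneg)
qed

lemma exp_le_exp_mult_div:
  fixes \<alpha> L :: real
  assumes a: "\<alpha> \<ge> 1"
  shows "exp L \<le> exp (\<alpha> * L) / \<alpha> + (\<alpha> - 1) / \<alpha>"
proof -
  have "exp ((1 - 1/\<alpha>) *\<^sub>R 0 + (1/\<alpha>) *\<^sub>R (\<alpha> * L)) \<le> (1 - 1/\<alpha>) * exp 0 + (1/\<alpha>) * exp (\<alpha> * L)"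
    using a by (intro convex_onD[OF exp_convex]) auto
  then show ?thesis using a by (simp add: field_simps)
qed

lemma Aof_measurable [measurable]: "Aof \<in> borel_measurable borel"
  unfolding Aof_def by measurable

lemma Aof_powr_eq_exp: "0 < x \<Longrightarrow> x < 1 \<Longrightarrow> Aof x powr p = exp (p * ln (Aof x))"
  by (simp add: Aof_def powr_def)

context
  fixes P :: "real measure" and \<alpha> \<delta> c :: real
  assumes P: "prob_space P" and sP: "sets P = sets borel"
    and m01: "measure P {0<..<1} = 1"
    and a1: "\<alpha> > 1"
    and mA: "(\<integral>\<^sup>+ w. ennreal (Aof w powr \<alpha>) \<partial>P) = 1"
    and d0: "\<delta> > 0"
    and mD: "(\<integral>\<^sup>+ w. ennreal (Aof w powr (\<alpha> + \<delta>)) \<partial>P) < \<infinity>"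
    and c0: "c \<ge> 0" and c1: "c \<le> \<delta>/2" and c2: "c \<le> \<alpha>/2"
begin

lemma AE_in_unit_interval: "AE x in P. 0 < x \<and> x < 1"
proof -
  interpret prob_space P by (rule P)
  have "AE x in P. x \<in> {0<..<1}" using m01 by (intro AE_prob_1) simp
  then show ?thesis by simp
qed

lemma Aof_measurable_P [measurable]: "Aof \<in> borel_measurable P"
  by (simp add: measurable_cong_sets[OF sP refl])

lemma integrable_const_P [simp]: "integrable P (\<lambda>_. r :: real)"
  using finite_measure.integrable_const[OF prob_space.finite_measure[OF P]] .

definition second_order_weight :: "real \<Rightarrow> real" where
  "second_order_weight x = Aof x powr \<alpha> * (ln (Aof x))^2 * exp (c * \<bar>ln (Aof x)\<bar>)"

lemma second_order_weight_nonneg: "second_order_weight x \<ge> 0"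
  by (simp add: second_order_weight_def)

lemma second_order_weight_measurable [measurable]: "second_order_weight \<in> borel_measurable P"
  unfolding second_order_weight_def by measurable

lemma integrable_Aof_powr: "integrable P (\<lambda>x. Aof x powr \<alpha>)"
  by (rule integrableI_nonneg) (use mA in auto)

lemma integral_Aof_powr: "integral\<^sup>L P (\<lambda>x. Aof x powr \<alpha>) = 1"
proof -
  have "ennreal (integral\<^sup>L P (\<lambda>x. Aof x powr \<alpha>)) = 1"
    using nn_integral_eq_integral[OF integrable_Aof_powr] mA by simp
  then show ?thesis
    by (metis ennreal_1 ennreal_inj integral_nonneg_AE powr_ge_zero AE_I2 zero_le_one)
qed

lemma integrable_second_order_weight: "integrable P second_order_weight"
proof (rule Bochner_Integration.integrable_bound)
  have "integrable P (\<lambda>x. Aof x powr (\<alpha> + \<delta>))"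
    by (rule integrableI_nonneg) (use mD in auto)
  then show "integrable P (\<lambda>x. (4/\<delta>)^2 * Aof x powr (\<alpha> + \<delta>) + (4/\<alpha>)^2)"
    by (intro Bochner_Integration.integrable_add integrable_mult_right) auto
  show "AE x in P. norm (second_order_weight x) \<le> norm ((4/\<delta>)^2 * Aof x powr (\<alpha> + \<delta>) + (4/\<alpha>)^2)"
    using AE_in_unit_interval
  proof eventually_elim
    case (elim x)
    have "second_order_weight x
        = exp (\<alpha> * ln (Aof x)) * (ln (Aof x))^2 * exp (c * \<bar>ln (Aof x)\<bar>)"
      using elim by (simp add: second_order_weight_def Aof_powr_eq_exp)
    also have "\<dots> \<le> (4/\<delta>)^2 * Aof x powr (\<alpha> + \<delta>) + (4/\<alpha>)^2"
      using a1 d0 c0 c1 c2 elim by (simp add: second_order_weight_le Aof_powr_eq_exp)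
    finally show ?case by (simp add: second_order_weight_nonneg)
  qed
qed simp

lemma integrable_Aof_powr_mult_ln: "integrable P (\<lambda>x. Aof x powr \<alpha> * ln (Aof x))"
proof (rule Bochner_Integration.integrable_bound)
  show "integrable P (\<lambda>x. Aof x powr \<alpha> + second_order_weight x)"
    using integrable_Aof_powr integrable_second_order_weight by (rule Bochner_Integration.integrable_add)
  show "AE x in P. norm (Aof x powr \<alpha> * ln (Aof x)) \<le> norm (Aof x powr \<alpha> + second_order_weight x)"
  proof (rule AE_I2)
    fix x
    define L where "L = ln (Aof x)"
    have "2 * \<bar>L\<bar> \<le> 1 + L^2"
      using zero_le_power2[of "\<bar>L\<bar> - 1"] by (simp add: power2_eq_square algebra_simps)
    then have "\<bar>L\<bar> \<le> 1 + L^2 * exp (c * \<bar>L\<bar>)"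
      using c0 zero_le_power2[of L] by (smt (verit) mult_le_cancel_left1 one_le_exp_iff
          mult_nonneg_nonneg zero_le_mult_iff)
    then have "Aof x powr \<alpha> * \<bar>L\<bar> \<le> Aof x powr \<alpha> * (1 + L^2 * exp (c * \<bar>L\<bar>))"
      by (intro mult_left_mono) auto
    then show "norm (Aof x powr \<alpha> * ln (Aof x)) \<le> norm (Aof x powr \<alpha> + second_order_weight x)"
      using second_order_weight_nonneg[of x]
      by (simp add: second_order_weight_def L_def abs_mult algebra_simps)
  qed
qed simp

lemma nn_integral_geom_mean_le_1: "(\<integral>\<^sup>+x. ennreal (geom_mean x) \<partial>P) \<le> 1"
proof -
  define f where "f x = Aof x powr \<alpha> / \<alpha> + (\<alpha> - 1) / \<alpha>" for x
  have "AE x in P. ennreal (geom_mean x) \<le> ennreal (f x)"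
    using AE_in_unit_interval
  proof eventually_elim
    case (elim x)
    have "geom_mean x = exp (ln (Aof x))" using elim by (simp add: geom_mean_eq_Aof Aof_def)
    also have "\<dots> \<le> f x"
      using a1 exp_le_exp_mult_div[of \<alpha> "ln (Aof x)"] elim by (simp add: f_def Aof_powr_eq_exp)
    finally show ?case by (rule ennreal_leI)
  qed
  then have "(\<integral>\<^sup>+x. ennreal (geom_mean x) \<partial>P) \<le> (\<integral>\<^sup>+x. ennreal (f x) \<partial>P)"
    by (rule nn_integral_mono_AE)
  also have "\<dots> = ennreal (integral\<^sup>L P f)"
    unfolding f_def using integrable_Aof_powr a1
    by (intro nn_integral_eq_integral Bochner_Integration.integrable_add integrable_divide AE_I2) auto
  also have "integral\<^sup>L P f = integral\<^sup>L P (\<lambda>x. Aof x powr \<alpha>) / \<alpha> + (\<alpha> - 1) / \<alpha>"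
    unfolding f_def using integrable_Aof_powr
    by (subst Bochner_Integration.integral_add) (auto simp: prob_space.prob_space[OF P])
  also have "\<dots> = 1" using integral_Aof_powr a1 by (simp add: field_simps)
  finally show ?thesis by simp
qed

lemma nn_integral_geom_mean_powr_le:
  assumes e: "0 \<le> \<epsilon>" "\<epsilon> \<le> c"
  shows "(\<integral>\<^sup>+x. ennreal (geom_mean x powr (\<alpha> + \<epsilon>)) \<partial>P)
    \<le> ennreal (1 + \<epsilon> * rho0 P \<alpha> + \<epsilon>^2 * integral\<^sup>L P second_order_weight)"
proof -
  define f where "f x = Aof x powr \<alpha> + \<epsilon> * (Aof x powr \<alpha> * ln (Aof x)) + \<epsilon>^2 * second_order_weight x"
    for x
  have intf: "integrable P f" unfolding f_def
    using integrable_Aof_powr integrable_Aof_powr_mult_ln integrable_second_order_weight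
    by (intro Bochner_Integration.integrable_add integrable_mult_right) auto
  have ptw: "AE x in P. geom_mean x powr (\<alpha> + \<epsilon>) \<le> f x"
    using AE_in_unit_interval
  proof eventually_elim
    case (elim x)
    then show ?case
      using exp_add_mult_le_second_order[OF e, of \<alpha> "ln (Aof x)"]
      by (simp add: f_def second_order_weight_def geom_mean_eq_Aof Aof_powr_eq_exp)
  qed
  have "(\<integral>\<^sup>+x. ennreal (geom_mean x powr (\<alpha> + \<epsilon>)) \<partial>P) \<le> (\<integral>\<^sup>+x. ennreal (f x) \<partial>P)"
    using ptw by (intro nn_integral_mono_AE) (auto elim!: eventually_mono intro: ennreal_leI)
  also have "\<dots> = ennreal (integral\<^sup>L P f)"
    using ptw by (intro nn_integral_eq_integral[OF intf]) (auto elim!: eventually_mono intro: order_trans[rotated])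
  also have "integral\<^sup>L P f = 1 + \<epsilon> * rho0 P \<alpha> + \<epsilon>^2 * integral\<^sup>L P second_order_weight"
    unfolding f_def rho0_def
    using integrable_Aof_powr integrable_Aof_powr_mult_ln integrable_second_order_weight integral_Aof_powr
    by (simp add: integrable_mult_right)
  finally show ?thesis .
qed

end

lemma moment_expansion:
  fixes P :: "real measure" and \<alpha> \<delta> :: real
  assumes "prob_space P" "sets P = sets borel" "measure P {0<..<1} = 1" "\<alpha> > 1"
    "(\<integral>\<^sup>+ w. ennreal (Aof w powr \<alpha>) \<partial>P) = 1" "\<delta> > 0"
    "(\<integral>\<^sup>+ w. ennreal (Aof w powr (\<alpha> + \<delta>)) \<partial>P) < \<infinity>"
  obtains c K where "c > 0" "K \<ge> 0"
    "(\<integral>\<^sup>+x. ennreal (geom_mean x) \<partial>P) \<le> 1"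
    "\<And>\<epsilon>. 0 \<le> \<epsilon> \<Longrightarrow> \<epsilon> \<le> c \<Longrightarrow>
       (\<integral>\<^sup>+x. ennreal (geom_mean x powr (\<alpha> + \<epsilon>)) \<partial>P) \<le> ennreal (1 + \<epsilon> * rho0 P \<alpha> + \<epsilon>^2 * K)"
proof
  define c where "c = min (\<delta>/2) (\<alpha>/2)"
  have c: "c \<ge> 0" "c \<le> \<delta>/2" "c \<le> \<alpha>/2" using assms by (auto simp: c_def)
  note hyps = assms c
  show "c > 0" using assms by (simp add: c_def)
  show "integral\<^sup>L P (second_order_weight \<alpha> c) \<ge> 0"
    by (intro integral_nonneg_AE AE_I2 second_order_weight_nonneg[OF hyps])
  show "(\<integral>\<^sup>+x. ennreal (geom_mean x) \<partial>P) \<le> 1"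
    by (rule nn_integral_geom_mean_le_1[OF hyps])
  show "(\<integral>\<^sup>+x. ennreal (geom_mean x powr (\<alpha> + \<epsilon>)) \<partial>P)
      \<le> ennreal (1 + \<epsilon> * rho0 P \<alpha> + \<epsilon>^2 * integral\<^sup>L P (second_order_weight \<alpha> c))"
    if "0 \<le> \<epsilon>" "\<epsilon> \<le> c" for \<epsilon>
    by (rule nn_integral_geom_mean_powr_le[OF hyps that])
qed

section \<open>The choice \<open>\<beta> = \<alpha> + (log x)^(-1/2)\<close>\<close>

lemma polynomial_factor_le:
  fixes \<alpha> \<beta> :: real
  assumes b: "1 \<le> \<beta>" "\<beta> \<le> \<alpha> + 1"
  shows "(real n * real (n+1)) powr (1 + \<beta>) * real (n+2) powr \<beta> \<le> real (n+2) powr (5 + 3 * \<alpha>)"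
proof -
  have "real n * real (n+1) \<le> real (n+2) ^ 2"
    unfolding power2_eq_square by (intro mult_mono) auto
  then have "(real n * real (n+1)) powr (1 + \<beta>) \<le> (real (n+2) ^ 2) powr (1 + \<beta>)"
    using b by (intro powr_mono2) auto
  also have "\<dots> = real (n+2) powr (2 * (1 + \<beta>))"
  proof -
    have "real (n+2) ^ 2 = real (n+2) powr 2" by (subst powr_numeral) auto
    then show ?thesis by (simp only: powr_powr)
  qed
  finally have "(real n * real (n+1)) powr (1 + \<beta>) * real (n+2) powr \<beta>
      \<le> real (n+2) powr (2 * (1 + \<beta>)) * real (n+2) powr \<beta>"
    by (intro mult_right_mono) (auto simp: powr_powr)
  also have "\<dots> = real (n+2) powr (2 + 3 * \<beta>)" by (simp add: powr_add[symmetric] algebra_simps)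
  also have "\<dots> \<le> real (n+2) powr (5 + 3 * \<alpha>)" using b by (intro powr_mono) auto
  finally show ?thesis .
qed

text \<open>This is where \<open>n \<le> L / \<rho> - L^(1/2+\<sigma>) + 1\<close> with \<open>L = log x\<close> enters:
  the moment \<open>1 + \<epsilon>\<rho> + \<epsilon>\<^sup>2K\<close>, raised to the power \<open>n + 1\<close>, costs
  \<open>x^\<epsilon>\<close> (absorbed by the extra \<open>\<epsilon>\<close> of the Markov bound) and gains
  \<open>exp(-\<rho> L^\<sigma>)\<close>, because \<open>\<epsilon> L^(1/2+\<sigma>) = L^\<sigma>\<close> and
  \<open>\<epsilon>\<^sup>2 L = 1\<close>.\<close>

lemma moment_power_le:
  fixes L \<epsilon> \<rho> K \<sigma> :: real and n :: nat
  assumes L: "L > 0" and eps: "\<epsilon> = L powr (-1/2)" "\<epsilon> \<le> 1"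
    and r: "\<rho> > 0" and K: "K \<ge> 0"
    and nL: "real n \<le> L / \<rho> - L powr (1/2 + \<sigma>) + 1"
  shows "(1 + \<epsilon> * \<rho> + \<epsilon>^2 * K) ^ (n+1) \<le> exp (\<epsilon> * L - \<rho> * L powr \<sigma> + (2 * \<rho> + K / \<rho> + 2 * K))"
proof -
  define t where "t = \<epsilon> * \<rho> + \<epsilon>^2 * K"
  define Pw where "Pw = L powr (1/2 + \<sigma>)"
  have e0: "\<epsilon> > 0" using eps L by simp
  have t0: "t \<ge> 0" using e0 r K by (simp add: t_def)
  have epw: "\<epsilon> * Pw = L powr \<sigma>"
    using L by (simp add: eps Pw_def powr_add[symmetric])
  have e2L: "\<epsilon>^2 * L = 1"
    using L by (simp add: eps power2_eq_square powr_add[symmetric] powr_minus_divide)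
  have "(1 + t) ^ (n+1) \<le> exp t ^ (n+1)"
    using t0 by (intro power_mono) (auto simp: exp_ge_add_one_self add.commute)
  also have "\<dots> = exp (real (n+1) * t)" by (rule exp_of_nat_mult[symmetric])
  also have "real (n+1) * t \<le> (L / \<rho> - Pw + 2) * t"
    using nL t0 by (intro mult_right_mono) (auto simp: Pw_def)
  also have "\<dots> = \<epsilon> * L - \<rho> * (\<epsilon> * Pw) + 2 * \<epsilon> * \<rho> + K / \<rho> * (\<epsilon>^2 * L)
                 - \<epsilon>^2 * K * Pw + 2 * \<epsilon>^2 * K"
    using r by (simp add: t_def field_simps)
  also have "\<dots> \<le> \<epsilon> * L - \<rho> * L powr \<sigma> + (2 * \<rho> + K / \<rho> + 2 * K)"
  proof -
    have "2 * \<epsilon> * \<rho> \<le> 2 * \<rho>" using eps r by simp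
    moreover have "2 * \<epsilon>^2 * K \<le> 2 * K" using e0 eps K by (simp add: mult_left_le_one_le power_le_one)
    moreover have "\<epsilon>^2 * K * Pw \<ge> 0" using K by (simp add: Pw_def)
    ultimately show ?thesis unfolding epw e2L by simp
  qed
  finally show ?thesis by (simp add: t_def add.assoc)
qed

lemma fact_nat_ceiling_le:
  fixes \<alpha> \<beta> :: real
  assumes "\<beta> \<le> \<alpha> + 1" "\<alpha> \<ge> 0"
  shows "fact (nat \<lceil>\<beta>\<rceil>) \<le> (fact (nat \<lceil>\<alpha>\<rceil> + 1) :: real)"
proof -
  have "\<lceil>\<beta>\<rceil> \<le> \<lceil>\<alpha>\<rceil> + 1" using assms ceiling_mono[of \<beta> "\<alpha> + 1"] by simp
  then have "nat \<lceil>\<beta>\<rceil> \<le> nat \<lceil>\<alpha>\<rceil> + 1" using assms by linarith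
  then show ?thesis by (intro fact_mono)
qed

lemma markov_bound_le:
  fixes L \<epsilon> \<rho> K \<alpha> \<sigma> :: real and n :: nat
  assumes L: "L > 0" and eps: "\<epsilon> = L powr (-1/2)" "\<epsilon> \<le> 1"
    and r: "\<rho> > 0" and K: "K \<ge> 0" and a: "\<alpha> > 1"
    and nL: "real n \<le> L / \<rho> - L powr (1/2 + \<sigma>) + 1"
    and big: "fact (nat \<lceil>\<alpha>\<rceil> + 1) * 4 powr (\<alpha> + 1) * exp (2 * \<rho> + K / \<rho> + 2 * K)
               * (L / \<rho> + 3) powr (5 + 3 * \<alpha>) \<le> exp (\<rho> / 2 * L powr \<sigma>)"
  shows "fact (nat \<lceil>\<alpha> + \<epsilon>\<rceil>) * 4 powr (\<alpha> + \<epsilon>) * (real n * real (n+1)) powr (1 + (\<alpha> + \<epsilon>))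
            * real (n+2) powr (\<alpha> + \<epsilon>) * (1 + \<epsilon> * \<rho> + \<epsilon>^2 * K) ^ (n+1) / exp L powr (\<alpha> + \<epsilon>)
         \<le> exp (- (\<rho> / 2) * L powr \<sigma>) * exp L powr (- \<alpha>)"
proof -
  define \<beta> where "\<beta> = \<alpha> + \<epsilon>"
  define F where "F = fact (nat \<lceil>\<alpha>\<rceil> + 1) * 4 powr (\<alpha> + 1) * exp (2 * \<rho> + K / \<rho> + 2 * K)"
  define D where "D = 5 + 3 * \<alpha>"
  have e0: "\<epsilon> > 0" using eps L by simp
  have b: "1 \<le> \<beta>" "\<beta> \<le> \<alpha> + 1" unfolding \<beta>_def using a e0 eps(2) by linarith+
  have poly: "(real n * real (n+1)) powr (1 + \<beta>) * real (n+2) powr \<beta> \<le> (L / \<rho> + 3) powr D"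
  proof -
    have "real n + 2 \<le> L / \<rho> + 3" using nL powr_ge_zero[of L "1/2 + \<sigma>"] by linarith
    then have "real (n+2) powr D \<le> (L / \<rho> + 3) powr D" using a by (intro powr_mono2) (auto simp: D_def)
    then show ?thesis using polynomial_factor_le[OF b, of n] unfolding D_def by linarith
  qed
  have "fact (nat \<lceil>\<beta>\<rceil>) * 4 powr \<beta> * (real n * real (n+1)) powr (1 + \<beta>) * real (n+2) powr \<beta>
          * (1 + \<epsilon> * \<rho> + \<epsilon>^2 * K) ^ (n+1) / exp L powr \<beta>
      = fact (nat \<lceil>\<beta>\<rceil>) * 4 powr \<beta> * ((real n * real (n+1)) powr (1 + \<beta>) * real (n+2) powr \<beta>)
          * (1 + \<epsilon> * \<rho> + \<epsilon>^2 * K) ^ (n+1) * exp (- (\<beta> * L))"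
    by (simp add: powr_def exp_minus field_simps)
  also have "\<dots> \<le> fact (nat \<lceil>\<alpha>\<rceil> + 1) * 4 powr (\<alpha> + 1) * (L / \<rho> + 3) powr D
      * exp (\<epsilon> * L - \<rho> * L powr \<sigma> + (2 * \<rho> + K / \<rho> + 2 * K)) * exp (- (\<beta> * L))"
    using fact_nat_ceiling_le[of \<beta> \<alpha>] poly moment_power_le[OF L eps r K nL] b e0 r K
    by (intro mult_right_mono mult_mono powr_mono) (auto intro!: add_nonneg_nonneg)
  also have "\<dots> = F * (L / \<rho> + 3) powr D * exp (- \<rho> * L powr \<sigma>) * exp (- \<alpha> * L)"
  proof -
    have "exp (\<epsilon> * L - \<rho> * L powr \<sigma> + (2 * \<rho> + K / \<rho> + 2 * K)) * exp (- (\<beta> * L))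
        = exp (2 * \<rho> + K / \<rho> + 2 * K) * (exp (- \<rho> * L powr \<sigma>) * exp (- \<alpha> * L))"
      by (simp add: \<beta>_def exp_add[symmetric] algebra_simps)
    then show ?thesis unfolding F_def by (simp only: mult.assoc) (simp only: mult_ac)
  qed
  also have "\<dots> \<le> exp (\<rho> / 2 * L powr \<sigma>) * exp (- \<rho> * L powr \<sigma>) * exp (- \<alpha> * L)"
    using big by (intro mult_right_mono) (auto simp: F_def D_def)
  also have "\<dots> = exp (- (\<rho> / 2) * L powr \<sigma>) * exp L powr (- \<alpha>)"
    by (simp add: powr_def exp_add[symmetric])
  finally show ?thesis by (simp add: \<beta>_def)
qed

lemma annealed_tail_0: "x \<ge> 0 \<Longrightarrow> annealed_tail P 0 0 x = 0"
  by (simp add: annealed_tail_def)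

lemma n1_le:
  fixes L \<rho> \<sigma> :: real
  shows "real_of_int (\<lfloor>L / \<rho>\<rfloor> - \<lfloor>L powr (1/2 + \<sigma>)\<rfloor>) \<le> L / \<rho> - L powr (1/2 + \<sigma>) + 1"
  by (smt (verit) of_int_diff of_int_floor_le real_of_int_floor_gt_diff_one)

lemma annealed_tail_n1_eventually_0:
  assumes "rho0 P \<alpha> \<le> 0"
  shows "\<forall>\<^sub>F x in at_top. annealed_tail P (nat (n1 P \<alpha> \<sigma> x)) (nat (n1 P \<alpha> \<sigma> x)) x = 0"
  using eventually_gt_at_top[of 1]
proof eventually_elim
  case (elim x)
  then have "ln x / rho0 P \<alpha> \<le> 0" using assms by (simp add: divide_nonneg_nonpos)
  then have "n1 P \<alpha> \<sigma> x \<le> 0" unfolding n1_def by (smt (verit) floor_le_zero powr_ge_zero zero_le_floor)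
  then show ?case using elim by (simp add: annealed_tail_0)
qed

lemma annealed_tail_n1_le:
  fixes P :: "real measure" and \<alpha> \<rho> \<sigma> K x :: real
  assumes P: "prob_space P" and sP: "sets P = sets borel" and a: "\<alpha> > 1"
    and \<rho>: "\<rho> = rho0 P \<alpha>" "\<rho> > 0" and K: "K \<ge> 0"
    and m1: "(\<integral>\<^sup>+w. ennreal (geom_mean w) \<partial>P) \<le> 1"
    and mom: "(\<integral>\<^sup>+w. ennreal (geom_mean w powr (\<alpha> + ln x powr (-1/2))) \<partial>P)
                \<le> ennreal (1 + ln x powr (-1/2) * \<rho> + (ln x powr (-1/2))^2 * K)"
    and x: "x > 1" and eps1: "ln x powr (-1/2) \<le> 1"
    and big: "fact (nat \<lceil>\<alpha>\<rceil> + 1) * 4 powr (\<alpha> + 1) * exp (2 * \<rho> + K / \<rho> + 2 * K)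
               * (ln x / \<rho> + 3) powr (5 + 3 * \<alpha>) \<le> exp (\<rho> / 2 * ln x powr \<sigma>)"
  shows "annealed_tail P (nat (n1 P \<alpha> \<sigma> x)) (nat (n1 P \<alpha> \<sigma> x)) x
           \<le> exp (- (\<rho>/2) * ln x powr \<sigma>) * x powr (- \<alpha>)"
proof (cases "n1 P \<alpha> \<sigma> x \<le> 0")
  case True
  then show ?thesis using x by (simp add: annealed_tail_0)
next
  case False
  define L where "L = ln x"
  define \<epsilon> where "\<epsilon> = L powr (-1/2)"
  define n where "n = nat (n1 P \<alpha> \<sigma> x)"
  define M where "M = 1 + \<epsilon> * \<rho> + \<epsilon>^2 * K"
  have L: "L > 0" and xL: "x = exp L" using x by (simp_all add: L_def)
  have e0: "\<epsilon> > 0" using L by (simp add: \<epsilon>_def)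
  have n: "n \<ge> 1" using False by (simp add: n_def)
  have nL: "real n \<le> L / \<rho> - L powr (1/2 + \<sigma>) + 1"
    using False n1_le[of L \<rho> \<sigma>] by (simp add: n_def n1_def \<rho>(1)[symmetric] L_def)
  have M1: "M \<ge> 1" using e0 \<rho> K by (simp add: M_def)
  have "annealed_tail P n n x \<le> fact (nat \<lceil>\<alpha> + \<epsilon>\<rceil>) * 4 powr (\<alpha> + \<epsilon>)
      * (real n * real (n+1)) powr (1 + (\<alpha> + \<epsilon>)) * real (n+2) powr (\<alpha> + \<epsilon>) * M ^ (n+1) / x powr (\<alpha> + \<epsilon>)"
  proof (rule annealed_tail_le_moments[OF P sP _ M1 _ _ n])
    show "(\<integral>\<^sup>+x. ennreal (geom_mean x) \<partial>P) \<le> ennreal M"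
      using M1 by (intro order_trans[OF m1]) simp
    show "(\<integral>\<^sup>+x. ennreal (geom_mean x powr (\<alpha> + \<epsilon>)) \<partial>P) \<le> ennreal M"
      using mom by (simp add: M_def \<epsilon>_def L_def)
  qed (use a e0 x in auto)
  also have "\<dots> \<le> exp (- (\<rho>/2) * L powr \<sigma>) * exp L powr (- \<alpha>)"
    unfolding xL M_def using big \<rho> K a nL eps1
    by (intro markov_bound_le[OF L \<epsilon>_def]) (simp_all add: L_def \<epsilon>_def)
  finally show ?thesis using x by (simp add: n_def L_def)
qed

lemma eventually_poly_le_exp_powr:
  fixes r s D F :: real
  assumes "r > 0" "s > 0" "D > 0" "F > 0"
  shows "\<forall>\<^sub>F L in at_top. F * (L / r + 3) powr D \<le> exp (r/2 * L powr s)"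
  using assms by real_asymp

lemma eventually_powr_neg_half_le:
  fixes m :: real
  assumes "m > 0"
  shows "\<forall>\<^sub>F L in at_top. L powr (-1/2) \<le> m"
  using assms by real_asymp

lemma annealed_tail_n1_eventually_le:
  fixes P :: "real measure" and \<alpha> \<rho> \<sigma> c K :: real
  assumes P: "prob_space P" and sP: "sets P = sets borel" and a: "\<alpha> > 1"
    and \<rho>: "\<rho> = rho0 P \<alpha>" "\<rho> > 0" and \<sigma>: "\<sigma> > 0" and c: "c > 0" and K: "K \<ge> 0"
    and m1: "(\<integral>\<^sup>+w. ennreal (geom_mean w) \<partial>P) \<le> 1"
    and mom: "\<And>\<epsilon>. 0 \<le> \<epsilon> \<Longrightarrow> \<epsilon> \<le> c \<Longrightarrow>
       (\<integral>\<^sup>+w. ennreal (geom_mean w powr (\<alpha> + \<epsilon>)) \<partial>P) \<le> ennreal (1 + \<epsilon> * \<rho> + \<epsilon>^2 * K)"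
  shows "\<forall>\<^sub>F x in at_top. annealed_tail P (nat (n1 P \<alpha> \<sigma> x)) (nat (n1 P \<alpha> \<sigma> x)) x
           \<le> exp (- (\<rho>/2) * ln x powr \<sigma>) * x powr (- \<alpha>)"
proof -
  define F where "F = fact (nat \<lceil>\<alpha>\<rceil> + 1) * 4 powr (\<alpha> + 1) * exp (2 * \<rho> + K / \<rho> + 2 * K)"
  have F: "F > 0" by (simp add: F_def)
  have "\<forall>\<^sub>F L in at_top. L powr (-1/2) \<le> min c 1 \<and>
      F * (L / \<rho> + 3) powr (5 + 3 * \<alpha>) \<le> exp (\<rho> / 2 * L powr \<sigma>)"
    using c \<rho> \<sigma> a F
    by (intro eventually_conj eventually_powr_neg_half_le eventually_poly_le_exp_powr) auto
  from eventually_compose_filterlim[OF this ln_at_top] eventually_gt_at_top[of 1]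
  show ?thesis
  proof eventually_elim
    case (elim x)
    then show ?case
      using mom[of "ln x powr (-1/2)"]
      by (intro annealed_tail_n1_le[OF P sP a \<rho> K m1]) (auto simp: F_def)
  qed
qed

theorem lemma4p3:
  fixes P :: "real measure" and \<alpha> :: real
  assumes "prob_space P" and "sets P = sets borel"
    and "measure P {0<..<1} = 1"
    and "\<alpha> > 1"
    and "(\<integral>\<^sup>+ w. ennreal (Aof w powr \<alpha>) \<partial>P) = 1"
    and "measure P {w. Aof w = 1} < 1"
    and "\<exists>\<delta>>0. (\<integral>\<^sup>+ w. ennreal (Aof w powr (\<alpha> + \<delta>)) \<partial>P) < \<infinity>"
    and "\<not> (\<exists>h>0. AE w in P. ln (Aof w) \<in> {h * of_int k | k. True})"
  shows "\<exists>\<sigma>0>0. \<forall>\<sigma>. 0 < \<sigma> \<and> \<sigma> < \<sigma>0 \<longrightarrow>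
           (\<exists>C>0. \<exists>\<delta>'>0. \<forall>\<^sub>F x in at_top.
              annealed_tail P (nat (n1 P \<alpha> \<sigma> x)) (nat (n1 P \<alpha> \<sigma> x)) x
                \<le> exp (- C * ln x powr \<delta>') * x powr (- \<alpha>))"
proof -
  obtain \<delta> where \<delta>: "\<delta> > 0" "(\<integral>\<^sup>+ w. ennreal (Aof w powr (\<alpha> + \<delta>)) \<partial>P) < \<infinity>"
    using assms(7) by blast
  obtain c K where c: "c > 0" and K: "K \<ge> 0" and moments:
      "(\<integral>\<^sup>+x. ennreal (geom_mean x) \<partial>P) \<le> 1"
      "\<And>\<epsilon>. 0 \<le> \<epsilon> \<Longrightarrow> \<epsilon> \<le> c \<Longrightarrow>
        (\<integral>\<^sup>+x. ennreal (geom_mean x powr (\<alpha> + \<epsilon>)) \<partial>P) \<le> ennreal (1 + \<epsilon> * rho0 P \<alpha> + \<epsilon>^2 * K)"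
    using moment_expansion[OF assms(1-5) \<delta>] by blast
  have "\<exists>C>0. \<exists>\<delta>'>0. \<forall>\<^sub>F x in at_top. annealed_tail P (nat (n1 P \<alpha> \<sigma> x)) (nat (n1 P \<alpha> \<sigma> x)) x
          \<le> exp (- C * ln x powr \<delta>') * x powr (- \<alpha>)" if \<sigma>: "\<sigma> > 0" for \<sigma>
  proof (cases "rho0 P \<alpha> > 0")
    case True
    with \<sigma> show ?thesis
      by (intro exI[of _ "rho0 P \<alpha> / 2"] exI[of _ \<sigma>] conjI
          annealed_tail_n1_eventually_le[OF assms(1,2,4) refl True \<sigma> c K moments]) auto
  next
    case False
    with annealed_tail_n1_eventually_0[of P \<alpha> \<sigma>] show ?thesis
      by (intro exI[of _ 1] conjI) (auto elim!: eventually_mono)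
  qed
  then show ?thesis by (intro exI[of _ 1]) auto
qed

end
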